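(* Let $X$ be a finite rack. There exists $N_0$ (depending on $X$) such that for every $N\ge N_0$, the natural semigroup homomorphism $S_X^*(N)\to\Gamma_X$, sending the class of $(x_1,\dots,x_n)$ to $x_1\cdots x_n$, is injective.
   Context: A rack is a set $X$ with an operation $x^y$ such that $x\mapsto x^y$ is bijective for each $y$ and $(z^x)^y=(z^y)^{x^y}$. Its connected components $C_1,\dots,C_k$ are the classes of the smallest equivalence relation with $x\sim x^y$. $B_n$ acts on $X^n$ from the right by $(\dots,x_i,x_{i+1},\dots)^{\sigma_i}=(\dots,x_{i+1},x_i^{x_{i+1}},\dots)$. The structure semigroup is $S_X=\bigsqcup_{n\ge1}X^n/B_n$ with concatenation. The structure group is $\Gamma_X=\langle X\mid y^{-1}xy=x^y\text{ for all }x,y\in X\rangle$. For nonnegative $n_1,\dots,n_k$ with sum $n$, $X^*(n_1,\dots,n_k)$ is the set of $(x_1,\dots,x_n)\in X^n$ with exactly $n_j$ entries in $C_j$ for each $j$ whose entries generate $X$ (lie in no proper subset closed under $x^y$), and $S_X^*(N)=\bigcup_{n_1,\dots,n_k\ge N}X^*(n_1,\dots,n_k)/B_n$. *)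

theory Defs
  imports Main
begin

text \<open>A rack: a carrier set X with an operation op x y (written x^y in the paper).\<close>
definition rack :: "'a set \<Rightarrow> ('a \<Rightarrow> 'a \<Rightarrow> 'a) \<Rightarrow> bool" where
  "rack X op \<longleftrightarrow>
     (\<forall>x\<in>X. \<forall>y\<in>X. op x y \<in> X) \<and>
     (\<forall>y\<in>X. bij_betw (\<lambda>x. op x y) X X) \<and>
     (\<forall>x\<in>X. \<forall>y\<in>X. \<forall>z\<in>X. op (op z x) y = op (op z y) (op x y))"

definition rack_rel :: "'a set \<Rightarrow> ('a \<Rightarrow> 'a \<Rightarrow> 'a) \<Rightarrow> ('a \<times> 'a) set" where
  "rack_rel X op = (let R = {(x, op x y) | x y. x \<in> X \<and> y \<in> X} in (R \<union> R\<inverse>)\<^sup>* \<inter> (X \<times> X))"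

definition components :: "'a set \<Rightarrow> ('a \<Rightarrow> 'a \<Rightarrow> 'a) \<Rightarrow> 'a set set" where
  "components X op = X // rack_rel X op"

definition generates :: "'a set \<Rightarrow> ('a \<Rightarrow> 'a \<Rightarrow> 'a) \<Rightarrow> 'a list \<Rightarrow> bool" where
  "generates X op xs \<longleftrightarrow>
     (\<forall>Y. Y \<subseteq> X \<and> set xs \<subseteq> Y \<and> (\<forall>a\<in>Y. \<forall>b\<in>Y. op a b \<in> Y) \<longrightarrow> Y = X)"

text \<open>The braid generator sigma_i (0-based index i) acting on tuples.\<close>
definition sigma :: "('a \<Rightarrow> 'a \<Rightarrow> 'a) \<Rightarrow> nat \<Rightarrow> 'a list \<Rightarrow> 'a list" where
  "sigma op i xs = xs[i := xs ! Suc i, Suc i := op (xs ! i) (xs ! Suc i)]"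

definition hurwitz_step :: "('a \<Rightarrow> 'a \<Rightarrow> 'a) \<Rightarrow> ('a list \<times> 'a list) set" where
  "hurwitz_step op = {(xs, sigma op i xs) | xs i. Suc i < length xs}"

definition braid_equiv :: "('a \<Rightarrow> 'a \<Rightarrow> 'a) \<Rightarrow> 'a list \<Rightarrow> 'a list \<Rightarrow> bool" where
  "braid_equiv op xs ys \<longleftrightarrow> (xs, ys) \<in> (hurwitz_step op \<union> (hurwitz_step op)\<inverse>)\<^sup>*"

text \<open>Elements of the structure group Gamma_X are represented by words over X and inverses:
  (x, True) stands for x, (x, False) for x^{-1}.  gamma_eq is the congruence on words
  generated by free cancellation and the defining relations y^{-1} x y = x^y, i.e.
  equality in the group with presentation <X | y^{-1} x y = x^y>.\<close>
inductive gamma_eq :: "'a set \<Rightarrow> ('a \<Rightarrow> 'a \<Rightarrow> 'a) \<Rightarrow> ('a \<times> bool) list \<Rightarrow> ('a \<times> bool) list \<Rightarrow> bool"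
  for X op where
  refl: "gamma_eq X op w w"
| sym: "gamma_eq X op w v \<Longrightarrow> gamma_eq X op v w"
| trans: "gamma_eq X op u v \<Longrightarrow> gamma_eq X op v w \<Longrightarrow> gamma_eq X op u w"
| ctxt: "gamma_eq X op w v \<Longrightarrow> gamma_eq X op (p @ w @ q) (p @ v @ q)"
| cancel: "x \<in> X \<Longrightarrow> gamma_eq X op [(x, b), (x, \<not> b)] []"
| rel: "x \<in> X \<Longrightarrow> y \<in> X \<Longrightarrow> gamma_eq X op [(y, False), (x, True), (y, True)] [(op x y, True)]"

definition gamma_word :: "'a list \<Rightarrow> ('a \<times> bool) list" where
  "gamma_word xs = map (\<lambda>x. (x, True)) xs"

definition S_star :: "'a set \<Rightarrow> ('a \<Rightarrow> 'a \<Rightarrow> 'a) \<Rightarrow> nat \<Rightarrow> 'a list set" where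
  "S_star X op N = {xs. xs \<noteq> [] \<and> set xs \<subseteq> X \<and> generates X op xs \<and>
      (\<forall>C \<in> components X op. length (filter (\<lambda>x. x \<in> C) xs) \<ge> N)}"

end

theory Submission
  imports Defs "HOL-Library.FuncSet" "HOL-Library.Multiset"
begin

(* A finite rack has a common period e of all right translations z \<mapsto> z^x, so every word in
   which each letter occurs e times in a row ("period word") acts trivially on X; such words are
   central in \<Gamma>_X and commute with every tuple up to the braid action.  Writing x^-1 as
   x^(e-1) (x^e)^-1 turns an equality of tuples in \<Gamma>_X into a braid equivalence z xs ~ z ys
   for some period word z.

   To cancel z, count the braid orbits of generating tuples with prescribed numbers of entries in
   each component.  Once all these numbers exceed |X| + |X^X|, pigeonhole on the prefix actions
   yields a central subword meeting any given component C, and conjugating it through the rest of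
   the tuple, which still generates X, brings any x in C to the front.  Hence prepending x maps the
   orbits onto the orbits with one more entry in C, so the number of orbits is non-increasing,
   eventually constant, and from then on prepending a letter is injective. *)

lemma generates_mono: "generates X op t \<Longrightarrow> set t \<subseteq> set m \<Longrightarrow> generates X op m"
  unfolding generates_def by blast

locale rack_on =
  fixes X :: "'a set" and op :: "'a \<Rightarrow> 'a \<Rightarrow> 'a"
  assumes rack: "rack X op"
begin

lemma op_closed: "x \<in> X \<Longrightarrow> y \<in> X \<Longrightarrow> op x y \<in> X"
  using rack unfolding rack_def by blast

lemma op_bij: "y \<in> X \<Longrightarrow> bij_betw (\<lambda>x. op x y) X X"
  using rack unfolding rack_def by blast

lemma op_self_distrib:
  "x \<in> X \<Longrightarrow> y \<in> X \<Longrightarrow> z \<in> X \<Longrightarrow> op (op z x) y = op (op z y) (op x y)"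
  using rack unfolding rack_def by blast

definition inv_op :: "'a \<Rightarrow> 'a \<Rightarrow> 'a" where
  "inv_op z y = the_inv_into X (\<lambda>x. op x y) z"

lemma inv_op_closed: "z \<in> X \<Longrightarrow> y \<in> X \<Longrightarrow> inv_op z y \<in> X"
  unfolding inv_op_def using op_bij[of y]
  by (metis bij_betw_def subset_refl the_inv_into_into)

lemma op_inv_op [simp]: "z \<in> X \<Longrightarrow> y \<in> X \<Longrightarrow> op (inv_op z y) y = z"
  unfolding inv_op_def using op_bij[of y]
  by (metis bij_betw_def f_the_inv_into_f image_eqI)

lemma inv_op_op [simp]: "z \<in> X \<Longrightarrow> y \<in> X \<Longrightarrow> inv_op (op z y) y = z"
  unfolding inv_op_def using op_bij[of y]
  by (metis bij_betw_def the_inv_into_f_f)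

text \<open>Self-distributivity says that right translation by \<open>op a b\<close> is the conjugate of
  right translation by \<open>a\<close> under right translation by \<open>b\<close>.\<close>

lemma op_op_conj:
  assumes "y \<in> X" "a \<in> X" "b \<in> X"
  shows "op y (op a b) = op (op (inv_op y b) a) b"
  using op_self_distrib[of a b "inv_op y b"] assms inv_op_closed by simp

lemma inv_op_op_conj:
  assumes "y \<in> X" "a \<in> X" "b \<in> X"
  shows "inv_op y (op a b) = op (inv_op (inv_op y b) a) b"
proof -
  have yb: "inv_op y b \<in> X" and yba: "inv_op (inv_op y b) a \<in> X"
    using assms inv_op_closed by auto
  have "op (op (inv_op (inv_op y b) a) b) (op a b) = y"
    using op_op_conj[OF op_closed[OF yba assms(3)] assms(2,3)] yb yba assms by simp
  then show ?thesis
    using inv_op_op[of "op (inv_op (inv_op y b) a) b" "op a b"] op_closed yba assms by simp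
qed

abbreviation comps :: "'a set set" where "comps \<equiv> components X op"

lemma rack_rel_equiv: "equiv X (rack_rel X op)"
proof -
  define R where "R = {(x, op x y) | x y. x \<in> X \<and> y \<in> X}"
  have rel: "rack_rel X op = (R \<union> R\<inverse>)\<^sup>* \<inter> X \<times> X"
    unfolding rack_rel_def R_def Let_def by simp
  show ?thesis unfolding equiv_def
  proof (intro conjI)
    show "rack_rel X op \<subseteq> X \<times> X" unfolding rel by auto
    show "refl_on X (rack_rel X op)" unfolding refl_on_def rel by auto
    show "sym (rack_rel X op)" unfolding sym_def rel
      by (metis IntD1 IntD2 IntI SigmaD1 SigmaD2 SigmaI converse_Un converse_converse
          rtrancl_converseI sup_commute)
    show "trans (rack_rel X op)" unfolding trans_def rel by auto
  qed
qed

lemma component_subset: "C \<in> comps \<Longrightarrow> C \<subseteq> X"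
  unfolding components_def using rack_rel_equiv in_quotient_imp_subset by blast

lemma component_nonempty: "C \<in> comps \<Longrightarrow> \<exists>x. x \<in> C"
  unfolding components_def using rack_rel_equiv in_quotient_imp_non_empty by blast

lemma component_unique: "C \<in> comps \<Longrightarrow> C' \<in> comps \<Longrightarrow> x \<in> C \<Longrightarrow> x \<in> C' \<Longrightarrow> C = C'"
  unfolding components_def using rack_rel_equiv quotient_disj by blast

lemma component_exists: "x \<in> X \<Longrightarrow> \<exists>C\<in>comps. x \<in> C"
  unfolding components_def using rack_rel_equiv by (meson equiv_class_self quotientI)

lemma component_rack_rel_closed: "C \<in> comps \<Longrightarrow> a \<in> C \<Longrightarrow> (a, b) \<in> rack_rel X op \<Longrightarrow> b \<in> C"
  unfolding components_def using rack_rel_equiv by (metis equiv_class_eq_iff in_quotient_imp_closed)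

lemma op_in_component_iff:
  assumes "C \<in> comps" "a \<in> X" "b \<in> X"
  shows "op a b \<in> C \<longleftrightarrow> a \<in> C"
proof -
  have "(a, op a b) \<in> rack_rel X op"
    unfolding rack_rel_def Let_def using assms op_closed by blast
  moreover from this have "(op a b, a) \<in> rack_rel X op"
    using rack_rel_equiv by (meson equiv_def symD)
  ultimately show ?thesis
    using component_rack_rel_closed assms(1) by blast
qed

lemma component_subset_stable:
  assumes stable: "\<forall>a\<in>X. \<forall>y\<in>S. op y a \<in> S \<and> inv_op y a \<in> S"
    and C: "C \<in> comps" "c \<in> C" "c \<in> S"
  shows "C \<subseteq> S"
proof
  fix x assume "x \<in> C"
  define R where "R = {(x, op x y) | x y. x \<in> X \<and> y \<in> X}"
  have "(c, x) \<in> rack_rel X op"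
    using C \<open>x \<in> C\<close> rack_rel_equiv unfolding components_def
    using quotient_eq_iff by fastforce
  then have "(c, x) \<in> (R \<union> R\<inverse>)\<^sup>*"
    unfolding rack_rel_def R_def Let_def by simp
  then show "x \<in> S"
  proof (induction rule: rtrancl_induct)
    case base
    show ?case by (rule C(3))
  next
    case (step p q)
    from step.hyps(2) show ?case
    proof
      assume "(p, q) \<in> R"
      then show ?thesis using stable step.IH unfolding R_def by blast
    next
      assume "(p, q) \<in> R\<inverse>"
      then obtain y where "p = op q y" "q \<in> X" "y \<in> X" unfolding R_def by blast
      then show ?thesis using stable step.IH by force
    qed
  qed
qed

definition count_in :: "'a set \<Rightarrow> 'a list \<Rightarrow> nat" where
  "count_in C xs = length (filter (\<lambda>x. x \<in> C) xs)"

lemma count_in_simps [simp]: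
  "count_in C [] = 0"
  "count_in C (a # xs) = (if a \<in> C then 1 else 0) + count_in C xs"
  "count_in C (xs @ ys) = count_in C xs + count_in C ys"
  unfolding count_in_def by auto

section \<open>Braid moves restricted to tuples over the rack\<close>

definition braid_move :: "('a list \<times> 'a list) set" where
  "braid_move = {(u @ a # b # v, u @ b # op a b # v) | u a b v. a \<in> X \<and> b \<in> X}"

text \<open>Unlike \<open>braid_equiv\<close>, only moves exchanging two letters of \<open>X\<close> are allowed, so that
  the numbers of entries in each component are invariant.\<close>

definition braided :: "'a list \<Rightarrow> 'a list \<Rightarrow> bool" (infix "\<sim>" 50) where
  "xs \<sim> ys \<longleftrightarrow> (xs, ys) \<in> (braid_move \<union> braid_move\<inverse>)\<^sup>*"

lemma braided_refl [simp]: "xs \<sim> xs"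
  unfolding braided_def by simp

lemma braided_sym: "xs \<sim> ys \<Longrightarrow> ys \<sim> xs"
  unfolding braided_def
  by (metis converse_Un converse_converse rtrancl_converseI sup_commute)

lemma braided_trans [trans]: "xs \<sim> ys \<Longrightarrow> ys \<sim> zs \<Longrightarrow> xs \<sim> zs"
  unfolding braided_def by simp

lemma braided_move: "a \<in> X \<Longrightarrow> b \<in> X \<Longrightarrow> u @ a # b # v \<sim> u @ b # op a b # v"
  unfolding braided_def braid_move_def by blast

lemma braid_move_append:
  assumes "(xs, ys) \<in> braid_move"
  shows "(p @ xs @ q, p @ ys @ q) \<in> braid_move"
proof -
  obtain u a b v where "xs = u @ a # b # v" "ys = u @ b # op a b # v" "a \<in> X" "b \<in> X"
    using assms unfolding braid_move_def by blast
  then have "(p @ xs @ q, p @ ys @ q) = ((p @ u) @ a # b # v @ q, (p @ u) @ b # op a b # v @ q)"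
    by simp
  with \<open>a \<in> X\<close> \<open>b \<in> X\<close> show ?thesis unfolding braid_move_def by blast
qed

lemma braided_append: "xs \<sim> ys \<Longrightarrow> p @ xs @ q \<sim> p @ ys @ q"
  unfolding braided_def
proof (induction rule: rtrancl_induct)
  case (step y z)
  then have "(p @ y @ q, p @ z @ q) \<in> braid_move \<union> braid_move\<inverse>"
    using braid_move_append by blast
  with step.IH show ?case by (rule rtrancl.rtrancl_into_rtrancl)
qed simp

lemma braided_append_left: "xs \<sim> ys \<Longrightarrow> p @ xs \<sim> p @ ys"
  using braided_append[of xs ys p "[]"] by simp

lemma braided_append_right: "xs \<sim> ys \<Longrightarrow> xs @ q \<sim> ys @ q"
  using braided_append[of xs ys "[]" q] by simp

lemma braided_count_in:
  assumes "xs \<sim> ys" "C \<in> comps"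
  shows "count_in C xs = count_in C ys"
  using assms(1) unfolding braided_def
proof (induction rule: rtrancl_induct)
  case (step y z)
  then show ?case
    using op_in_component_iff[OF assms(2)] unfolding braid_move_def by auto
qed simp

lemma braid_move_subset_hurwitz_step: "braid_move \<subseteq> hurwitz_step op"
proof
  fix p assume "p \<in> braid_move"
  then obtain u a b v where p: "p = (u @ a # b # v, u @ b # op a b # v)"
    unfolding braid_move_def by blast
  have "sigma op (length u) (u @ a # b # v) = u @ b # op a b # v"
    unfolding sigma_def by (simp add: list_update_append nth_append)
  moreover have "Suc (length u) < length (u @ a # b # v)" by simp
  ultimately show "p \<in> hurwitz_step op"
    unfolding hurwitz_step_def p by (metis (mono_tags, lifting) mem_Collect_eq)
qed

lemma braided_imp_braid_equiv: "xs \<sim> ys \<Longrightarrow> braid_equiv op xs ys"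
  unfolding braided_def braid_equiv_def
  by (meson Un_mono converse_mono rtrancl_mono braid_move_subset_hurwitz_step subsetD)

section \<open>The right action of words and central words\<close>

fun act :: "'a list \<Rightarrow> 'a \<Rightarrow> 'a" where
  "act [] z = z"
| "act (b # u) z = act u (op z b)"

lemma act_append: "act (p @ q) z = act q (act p z)"
  by (induction p arbitrary: z) auto

lemma act_closed: "set u \<subseteq> X \<Longrightarrow> z \<in> X \<Longrightarrow> act u z \<in> X"
  by (induction u arbitrary: z) (auto simp: op_closed)

lemma act_bij: "set u \<subseteq> X \<Longrightarrow> bij_betw (act u) X X"
proof (induction u)
  case Nil
  then show ?case by (simp add: bij_betw_def inj_on_def)
next
  case (Cons b u)
  have "act (b # u) = act u \<circ> (\<lambda>z. op z b)" by auto
  then show ?case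
    using bij_betw_trans[OF op_bij[of b] Cons.IH] Cons.prems by (simp add: comp_def)
qed

lemma braided_Cons_to_end: "set u \<subseteq> X \<Longrightarrow> a \<in> X \<Longrightarrow> a # u \<sim> u @ [act u a]"
proof (induction u arbitrary: a)
  case (Cons b u)
  have "a # b # u \<sim> b # op a b # u"
    using braided_move[of a b "[]" u] Cons.prems by simp
  also have "\<dots> \<sim> b # u @ [act u (op a b)]"
    using braided_append_left[OF Cons.IH[of "op a b"], of "[b]"] Cons.prems op_closed by simp
  finally show ?case by (simp only: act.simps append_Cons)
qed simp

lemma braided_snoc_to_front:
  "set t \<subseteq> X \<Longrightarrow> a \<in> X \<Longrightarrow> t @ [a] \<sim> a # map (\<lambda>y. op y a) t"
proof (induction t)
  case (Cons b t)
  have "(b # t) @ [a] \<sim> b # a # map (\<lambda>y. op y a) t"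
    using braided_append_left[OF Cons.IH, of "[b]"] Cons.prems by simp
  also have "\<dots> \<sim> a # op b a # map (\<lambda>y. op y a) t"
    using braided_move[of b a "[]" "map (\<lambda>y. op y a) t"] Cons.prems op_closed by auto
  finally show ?case by simp
qed simp

lemma braided_swap_blocks: "set t \<subseteq> X \<Longrightarrow> set u \<subseteq> X \<Longrightarrow> t @ u \<sim> u @ map (act u) t"
proof (induction u arbitrary: t)
  case (Cons a u)
  have "t @ a # u \<sim> a # map (\<lambda>y. op y a) t @ u"
    using braided_append_right[OF braided_snoc_to_front[of t a], of u] Cons.prems by simp
  also have "\<dots> \<sim> a # u @ map (act u) (map (\<lambda>y. op y a) t)"
    using braided_append_left[OF Cons.IH[of "map (\<lambda>y. op y a) t"], of "[a]"] Cons.prems op_closed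
    by auto
  finally show ?case by (simp add: comp_def)
qed (simp add: map_idI)

definition central :: "'a list \<Rightarrow> bool" where
  "central u \<longleftrightarrow> set u \<subseteq> X \<and> (\<forall>y\<in>X. act u y = y)"

lemma central_Nil [simp]: "central []"
  unfolding central_def by simp

lemma central_append: "central u \<Longrightarrow> central v \<Longrightarrow> central (u @ v)"
  unfolding central_def by (auto simp: act_append)

lemma central_commute: "central u \<Longrightarrow> set t \<subseteq> X \<Longrightarrow> t @ u \<sim> u @ t"
  using braided_swap_blocks[of t u] unfolding central_def by (simp add: map_idI subset_iff)

lemma act_map_op:
  assumes "set v \<subseteq> X" "a \<in> X" "z \<in> X"
  shows "act (map (\<lambda>y. op y a) v) z = op (act v (inv_op z a)) a"
  using assms
proof (induction v arbitrary: z)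
  case (Cons b v)
  let ?w = "op (inv_op z a) b"
  have w: "?w \<in> X" using Cons.prems inv_op_closed op_closed by simp
  have "act (map (\<lambda>y. op y a) (b # v)) z = act (map (\<lambda>y. op y a) v) (op ?w a)"
    using op_op_conj Cons.prems by simp
  also have "\<dots> = op (act v (inv_op (op ?w a) a)) a"
    using Cons w op_closed by simp
  also have "\<dots> = op (act v ?w) a"
    using w Cons.prems by simp
  finally show ?case by simp
qed simp

lemma central_map_op_iff:
  assumes "set v \<subseteq> X" "a \<in> X"
  shows "central (map (\<lambda>y. op y a) v) \<longleftrightarrow> central v"
proof -
  have "set (map (\<lambda>y. op y a) v) \<subseteq> X"
    using assms op_closed by auto
  then have "central (map (\<lambda>y. op y a) v) \<longleftrightarrow> (\<forall>z\<in>X. act (map (\<lambda>y. op y a) v) z = z)"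
    unfolding central_def by simp
  also have "\<dots> \<longleftrightarrow> (\<forall>z\<in>X. op (act v (inv_op z a)) a = z)"
    using act_map_op assms by simp
  also have "\<dots> \<longleftrightarrow> (\<forall>y\<in>X. act v y = y)"
  proof
    assume fix_all: "\<forall>z\<in>X. op (act v (inv_op z a)) a = z"
    show "\<forall>y\<in>X. act v y = y"
    proof
      fix y assume "y \<in> X"
      then have "op (act v y) a = op y a"
        using fix_all[rule_format, of "op y a"] assms op_closed by simp
      then have "inv_op (op (act v y) a) a = inv_op (op y a) a" by simp
      then show "act v y = y"
        using act_closed assms \<open>y \<in> X\<close> by simp
    qed
  next
    assume "\<forall>y\<in>X. act v y = y"
    then show "\<forall>z\<in>X. op (act v (inv_op z a)) a = z"
      using assms inv_op_closed by simp
  qed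
  also have "\<dots> \<longleftrightarrow> central v"
    unfolding central_def using assms by simp
  finally show ?thesis .
qed

lemma braided_remdups:
  assumes "set w \<subseteq> X"
  shows "\<exists>B. set B \<subseteq> X \<and> w \<sim> remdups w @ B"
  using assms
proof (induction w)
  case (Cons a w)
  then obtain B where B: "set B \<subseteq> X" "w \<sim> remdups w @ B" by auto
  have "a # w \<sim> a # remdups w @ B"
    using braided_append_left[OF B(2), of "[a]"] by simp
  show ?case
  proof (cases "a \<in> set w")
    case True
    have "a # remdups w @ B \<sim> remdups w @ act (remdups w) a # B"
      using braided_append_right[OF braided_Cons_to_end, of "remdups w" a B] Cons.prems by simp
    moreover have "act (remdups w) a \<in> X"
      using act_closed Cons.prems by simp
    ultimately show ?thesis
      using \<open>a # w \<sim> a # remdups w @ B\<close> True B(1) braided_trans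
      by (metis insert_subset list.simps(15) remdups.simps(2))
  next
    case False
    then show ?thesis using \<open>a # w \<sim> a # remdups w @ B\<close> B(1) by auto
  qed
qed (intro exI[of _ "[]"], simp)

lemma central_map_inv_op:
  assumes "central v" "a \<in> X"
  shows "central (map (\<lambda>y. inv_op y a) v)"
proof -
  have "set v \<subseteq> X" using assms(1) unfolding central_def by blast
  then have "map (\<lambda>y. op y a) (map (\<lambda>y. inv_op y a) v) = v"
    using assms(2) by (induction v) auto
  then show ?thesis
    using central_map_op_iff[of "map (\<lambda>y. inv_op y a) v" a] assms \<open>set v \<subseteq> X\<close> inv_op_closed
    by auto
qed

lemma central_conj_op:
  assumes "central v" "a \<in> set t" "set t \<subseteq> X"
  shows "v @ t \<sim> map (\<lambda>y. op y a) v @ t"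
proof -
  obtain t1 t2 where t: "t = t1 @ a # t2" using assms(2) by (meson split_list)
  let ?v = "map (\<lambda>y. op y a) v"
  have "set v \<subseteq> X" "a \<in> X" "set t1 \<subseteq> X"
    using assms t unfolding central_def by auto
  then have "central ?v" using central_map_op_iff assms(1) by blast
  have "v @ t \<sim> t1 @ (v @ [a]) @ t2"
    using braided_append_right[OF braided_sym[OF central_commute[OF assms(1)]], of t1 "a # t2"]
      \<open>set t1 \<subseteq> X\<close> t by simp
  also have "\<dots> \<sim> t1 @ (a # ?v) @ t2"
    using braided_append[OF braided_snoc_to_front] \<open>set v \<subseteq> X\<close> \<open>a \<in> X\<close> by blast
  also have "\<dots> \<sim> ?v @ t"
    using braided_append_right[OF central_commute[OF \<open>central ?v\<close>], of "t1 @ [a]" t2]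
      \<open>set t1 \<subseteq> X\<close> \<open>a \<in> X\<close> t by simp
  finally show ?thesis .
qed

lemma central_conj_inv_op:
  assumes "central v" "a \<in> set t" "set t \<subseteq> X"
  shows "v @ t \<sim> map (\<lambda>y. inv_op y a) v @ t"
proof -
  have "set v \<subseteq> X" "a \<in> X" using assms unfolding central_def by auto
  then have "map (\<lambda>y. op y a) (map (\<lambda>y. inv_op y a) v) = v"
    by (induction v) auto
  then show ?thesis
    using central_conj_op[OF central_map_inv_op[OF assms(1) \<open>a \<in> X\<close>] assms(2,3)] braided_sym
    by simp
qed

text \<open>The translations preserving a set in both directions form a subrack.\<close>

lemma translation_stable_generated:
  assumes "S \<subseteq> X" "set t \<subseteq> X" "generates X op t"
    and stable: "\<forall>a\<in>set t. \<forall>y\<in>S. op y a \<in> S \<and> inv_op y a \<in> S"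
  shows "\<forall>a\<in>X. \<forall>y\<in>S. op y a \<in> S \<and> inv_op y a \<in> S"
proof -
  define T where "T = {a \<in> X. \<forall>y\<in>S. op y a \<in> S \<and> inv_op y a \<in> S}"
  have "\<forall>a\<in>T. \<forall>b\<in>T. op a b \<in> T"
  proof (intro ballI)
    fix a b assume "a \<in> T" "b \<in> T"
    then have "a \<in> X" "b \<in> X" and ta: "\<forall>y\<in>S. op y a \<in> S \<and> inv_op y a \<in> S"
      and tb: "\<forall>y\<in>S. op y b \<in> S \<and> inv_op y b \<in> S"
      unfolding T_def by auto
    have "op y (op a b) \<in> S \<and> inv_op y (op a b) \<in> S" if "y \<in> S" for y
    proof -
      have "y \<in> X" using that assms(1) by blast
      have "op (op (inv_op y b) a) b \<in> S" "op (inv_op (inv_op y b) a) b \<in> S"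
        using ta tb that by blast+
      then show ?thesis
        using op_op_conj[of y a b] inv_op_op_conj[of y a b] \<open>y \<in> X\<close> \<open>a \<in> X\<close> \<open>b \<in> X\<close>
        by simp
    qed
    then show "op a b \<in> T" unfolding T_def using op_closed \<open>a \<in> X\<close> \<open>b \<in> X\<close> by blast
  qed
  moreover have "set t \<subseteq> T" unfolding T_def using assms(2) stable by blast
  moreover have "T \<subseteq> X" unfolding T_def by blast
  ultimately have "T = X"
    using assms(3) unfolding generates_def by blast
  then show ?thesis unfolding T_def by blast
qed

lemma central_conj_reaches_component:
  assumes "central u" "c \<in> set u" "C \<in> comps" "c \<in> C" "x \<in> C"
    and t: "set t \<subseteq> X" "generates X op t"
  shows "\<exists>v. central v \<and> x \<in> set v \<and> u @ t \<sim> v @ t"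
proof -
  define S where "S = {y. \<exists>v. central v \<and> y \<in> set v \<and> u @ t \<sim> v @ t}"
  have "S \<subseteq> X" unfolding S_def central_def by blast
  have "op y a \<in> S \<and> inv_op y a \<in> S" if "a \<in> set t" "y \<in> S" for a y
  proof -
    obtain v where v: "central v" "y \<in> set v" "u @ t \<sim> v @ t"
      using \<open>y \<in> S\<close> unfolding S_def by blast
    have "a \<in> X" using that t by auto
    have "set v \<subseteq> X" using v(1) unfolding central_def by blast
    then have "central (map (\<lambda>y. op y a) v)"
      using central_map_op_iff v(1) \<open>a \<in> X\<close> by blast
    moreover have "central (map (\<lambda>y. inv_op y a) v)"
      using central_map_inv_op v(1) \<open>a \<in> X\<close> by blast
    moreover have "u @ t \<sim> map (\<lambda>y. op y a) v @ t" "u @ t \<sim> map (\<lambda>y. inv_op y a) v @ t"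
      using braided_trans[OF v(3)] central_conj_op central_conj_inv_op v(1) that(1) t by blast+
    ultimately show ?thesis
      unfolding S_def using v(2) by auto
  qed
  then have "\<forall>a\<in>X. \<forall>y\<in>S. op y a \<in> S \<and> inv_op y a \<in> S"
    using translation_stable_generated[OF \<open>S \<subseteq> X\<close> t] by blast
  moreover have "c \<in> S" unfolding S_def using assms(1,2) by auto
  ultimately have "C \<subseteq> S"
    using component_subset_stable assms(3,4) by blast
  then show ?thesis using assms(5) unfolding S_def by blast
qed

definition braid_class :: "'a list \<Rightarrow> 'a list set" where
  "braid_class w = {v. w \<sim> v}"

lemma braid_class_eq_iff: "braid_class w = braid_class v \<longleftrightarrow> w \<sim> v"
proof
  assume "braid_class w = braid_class v"
  then have "v \<in> braid_class w" unfolding braid_class_def by auto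
  then show "w \<sim> v" unfolding braid_class_def by simp
next
  assume "w \<sim> v"
  then show "braid_class w = braid_class v"
    unfolding braid_class_def using braided_sym braided_trans by blast
qed

definition prepend :: "'a \<Rightarrow> 'a list set \<Rightarrow> 'a list set" where
  "prepend x S = (\<Union>w\<in>S. braid_class (x # w))"

lemma prepend_braid_class: "prepend x (braid_class w) = braid_class (x # w)"
proof -
  have "braid_class (x # v) = braid_class (x # w)" if "v \<in> braid_class w" for v
  proof -
    have "x # w \<sim> x # v"
      using that braided_append_left[of w v "[x]"] unfolding braid_class_def by simp
    then show ?thesis using braid_class_eq_iff braided_sym by blast
  qed
  then have "prepend x (braid_class w) = (\<Union>v\<in>braid_class w. braid_class (x # w))"
    unfolding prepend_def by (rule SUP_cong[OF HOL.refl])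
  moreover have "w \<in> braid_class w" unfolding braid_class_def by simp
  ultimately show ?thesis by (auto simp only: UN_constant split: if_splits)
qed

end

section \<open>Period words\<close>

lemma pigeonhole_less:
  fixes g :: "'i::linorder \<Rightarrow> 'b"
  assumes "finite S" "g ` I \<subseteq> S" "card S < card I"
  obtains i j where "i \<in> I" "j \<in> I" "i < j" "g i = g j"
proof -
  have "card (g ` I) < card I"
    using card_mono[OF assms(1,2)] assms(3) by linarith
  then have "\<not> inj_on g I" by (rule pigeonhole)
  then obtain i j where "i \<in> I" "j \<in> I" "i \<noteq> j" "g i = g j"
    unfolding inj_on_def by blast
  then show ?thesis using that by (metis linorder_neqE)
qed

locale finite_rack = rack_on +
  assumes finite_carrier: "finite X"
begin

lemma finite_components: "finite comps"
  unfolding components_def using finite_carrier rack_rel_equiv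
  by (simp add: finite_quotient equiv_def)

lemma right_translations_periodic: "\<exists>e>0. \<forall>x\<in>X. \<forall>y\<in>X. ((\<lambda>z. op z x) ^^ e) y = y"
proof -
  define S where "S = X \<rightarrow>\<^sub>E X \<rightarrow>\<^sub>E X"
  define g where "g k = (\<lambda>x\<in>X. \<lambda>y\<in>X. ((\<lambda>z. op z x) ^^ k) y)" for k
  have bij: "bij_betw ((\<lambda>z. op z x) ^^ k) X X" if "x \<in> X" for x k
    using bij_betw_funpow[OF op_bij[OF that]] .
  have "finite S" unfolding S_def using finite_carrier by (simp add: finite_PiE)
  moreover have "g ` {..card S} \<subseteq> S"
    unfolding S_def g_def using bij bij_betw_apply by fastforce
  moreover have "card S < card {..card S}" by simp
  ultimately obtain i j where "i < j" "g i = g j"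
    using pigeonhole_less by metis
  show ?thesis
  proof (intro exI[of _ "j - i"] conjI ballI)
    show "0 < j - i" using \<open>i < j\<close> by simp
    fix x z assume "x \<in> X" "z \<in> X"
    let ?f = "\<lambda>z. op z x"
    obtain y where "y \<in> X" "z = (?f ^^ i) y"
      using bij[OF \<open>x \<in> X\<close>, of i] \<open>z \<in> X\<close> unfolding bij_betw_def by auto
    moreover have "(?f ^^ i) y = (?f ^^ j) y"
      using fun_cong[OF fun_cong[OF \<open>g i = g j\<close>, of x], of y] \<open>x \<in> X\<close> \<open>y \<in> X\<close>
      unfolding g_def by simp
    moreover have "(?f ^^ j) y = (?f ^^ (j - i)) ((?f ^^ i) y)"
      using funpow_add[of "j - i" i ?f] \<open>i < j\<close> by simp
    ultimately show "(?f ^^ (j - i)) z = z" by metis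
  qed
qed

definition period :: nat where
  "period = (SOME e. e > 0 \<and> (\<forall>x\<in>X. \<forall>y\<in>X. ((\<lambda>z. op z x) ^^ e) y = y))"

lemma period_pos: "period > 0"
  and funpow_period: "x \<in> X \<Longrightarrow> y \<in> X \<Longrightarrow> ((\<lambda>z. op z x) ^^ period) y = y"
  using someI_ex[OF right_translations_periodic] unfolding period_def by auto

definition period_word :: "'a list \<Rightarrow> 'a list" where
  "period_word s = concat (map (replicate period) s)"

lemma period_word_simps [simp]:
  "period_word [] = []"
  "period_word (x # s) = replicate period x @ period_word s"
  "period_word (s @ t) = period_word s @ period_word t"
  unfolding period_word_def by auto

lemma set_period_word [simp]: "set (period_word s) = set s"
  using period_pos by (induction s) auto

lemma act_replicate: "act (replicate n x) y = ((\<lambda>z. op z x) ^^ n) y"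
  by (induction n arbitrary: y) (simp_all add: funpow_Suc_right del: funpow.simps)

lemma central_period_word: "set s \<subseteq> X \<Longrightarrow> central (period_word s)"
proof (induction s)
  case (Cons x s)
  have "central (replicate period x)"
    unfolding central_def using Cons.prems funpow_period by (auto simp: act_replicate)
  then show ?case using Cons central_append by simp
qed simp

lemma period_words_commute:
  assumes "set s \<subseteq> X" "set t \<subseteq> X"
  shows "period_word s @ period_word t @ a \<sim> period_word t @ period_word s @ a"
proof -
  have "period_word t @ period_word s \<sim> period_word s @ period_word t"
    using central_commute[OF central_period_word[OF assms(1)]] assms(2) by simp
  then have "(period_word s @ period_word t) @ a \<sim> (period_word t @ period_word s) @ a"
    by (rule braided_append_right[OF braided_sym])
  then show ?thesis by simp
qed

lemma period_word_mset_eq: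
  "mset s = mset t \<Longrightarrow> set s \<subseteq> X \<Longrightarrow> period_word s @ a \<sim> period_word t @ a"
proof (induction s arbitrary: t)
  case Nil
  then show ?case by simp
next
  case (Cons x s)
  from Cons.prems(1) have "x \<in> set t" by (metis list.set_intros(1) set_mset_mset)
  then obtain t1 t2 where t: "t = t1 @ x # t2" by (meson split_list)
  with Cons.prems have "set t \<subseteq> X" by (metis set_mset_mset)
  have "period_word s @ a \<sim> period_word (t1 @ t2) @ a"
    using Cons.IH[of "t1 @ t2"] Cons.prems t by simp
  then have "period_word (x # s) @ a \<sim> period_word [x] @ period_word t1 @ period_word t2 @ a"
    using braided_append_left by simp
  also have "\<dots> \<sim> period_word t1 @ period_word [x] @ period_word t2 @ a"
    using period_words_commute[of "[x]" t1 "period_word t2 @ a"] \<open>set t \<subseteq> X\<close> t by simp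
  finally show ?case using t by simp
qed

definition stably_braided :: "'a list \<Rightarrow> 'a list \<Rightarrow> bool" where
  "stably_braided xs ys \<longleftrightarrow> (\<exists>s. set s \<subseteq> X \<and> period_word s @ xs \<sim> period_word s @ ys)"

lemma braided_imp_stably_braided: "xs \<sim> ys \<Longrightarrow> stably_braided xs ys"
  unfolding stably_braided_def by (intro exI[of _ "[]"]) simp

lemma stably_braided_sym: "stably_braided xs ys \<Longrightarrow> stably_braided ys xs"
  unfolding stably_braided_def using braided_sym by blast

lemma stably_braided_trans [trans]:
  assumes "stably_braided xs ys" "stably_braided ys zs"
  shows "stably_braided xs zs"
proof -
  obtain s t where "set s \<subseteq> X" "period_word s @ xs \<sim> period_word s @ ys"
    and "set t \<subseteq> X" "period_word t @ ys \<sim> period_word t @ zs"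
    using assms unfolding stably_braided_def by blast
  then have "period_word s @ period_word t @ xs \<sim> period_word t @ period_word s @ xs"
    by (simp add: period_words_commute)
  also have "\<dots> \<sim> period_word t @ period_word s @ ys"
    by (rule braided_append_left) fact
  also have "\<dots> \<sim> period_word s @ period_word t @ ys"
    using \<open>set s \<subseteq> X\<close> \<open>set t \<subseteq> X\<close> by (simp add: period_words_commute)
  also have "\<dots> \<sim> period_word s @ period_word t @ zs"
    by (rule braided_append_left) fact
  finally show ?thesis
    unfolding stably_braided_def using \<open>set s \<subseteq> X\<close> \<open>set t \<subseteq> X\<close>
    by (intro exI[of _ "s @ t"]) simp
qed

lemma braided_stably_braided_trans [trans]:
  "xs \<sim> ys \<Longrightarrow> stably_braided ys zs \<Longrightarrow> stably_braided xs zs"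
  using braided_imp_stably_braided stably_braided_trans by blast

lemma stably_braided_braided_trans [trans]:
  "stably_braided xs ys \<Longrightarrow> ys \<sim> zs \<Longrightarrow> stably_braided xs zs"
  using braided_imp_stably_braided stably_braided_trans by blast

lemma stably_braided_append:
  assumes "stably_braided xs ys" "set p \<subseteq> X"
  shows "stably_braided (p @ xs @ q) (p @ ys @ q)"
proof -
  obtain s where s: "set s \<subseteq> X" "period_word s @ xs \<sim> period_word s @ ys"
    using assms(1) unfolding stably_braided_def by blast
  have commute: "period_word s @ p @ zs \<sim> p @ period_word s @ zs" for zs
    using braided_append_right[OF central_commute[OF central_period_word[OF s(1)] assms(2)],
        of zs] braided_sym by simp
  have "period_word s @ p @ xs @ q \<sim> p @ (period_word s @ xs) @ q"
    using commute by simp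
  also have "\<dots> \<sim> p @ (period_word s @ ys) @ q"
    using braided_append s(2) by blast
  also have "\<dots> \<sim> period_word s @ p @ ys @ q"
    using commute braided_sym by simp
  finally show ?thesis
    unfolding stably_braided_def using s(1) by blast
qed

lemma stably_braided_cancel_period_word:
  "stably_braided (period_word t @ xs) (period_word t @ ys) \<Longrightarrow> set t \<subseteq> X \<Longrightarrow>
    stably_braided xs ys"
  unfolding stably_braided_def by (metis append_assoc period_word_simps(3) le_sup_iff set_append)

lemma stably_braided_period_word_trans:
  assumes "stably_braided (period_word t @ a) (period_word s @ b)"
    and "stably_braided (period_word r @ b) (period_word t @ c)"
    and "set s \<subseteq> X" "set t \<subseteq> X" "set r \<subseteq> X"
  shows "stably_braided (period_word r @ a) (period_word s @ c)"
proof -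
  have "period_word t @ period_word r @ a \<sim> period_word r @ period_word t @ a"
    using period_words_commute assms(4,5) by blast
  also have "stably_braided \<dots> (period_word r @ period_word s @ b)"
    using stably_braided_append[OF assms(1), of "period_word r" "[]"] assms(5) by simp
  also have "period_word r @ period_word s @ b \<sim> period_word s @ period_word r @ b"
    using period_words_commute assms(3,5) by blast
  also have "stably_braided \<dots> (period_word s @ period_word t @ c)"
    using stably_braided_append[OF assms(2), of "period_word s" "[]"] assms(3) by simp
  also have "period_word s @ period_word t @ c \<sim> period_word t @ period_word s @ c"
    using period_words_commute assms(3,4) by blast
  finally show ?thesis
    using stably_braided_cancel_period_word assms(4) by blast
qed

lemma stably_braided_period_word_append:
  assumes "stably_braided (period_word t @ a) (period_word s @ b)"
    and "set r \<subseteq> X" "set s \<subseteq> X" "set t \<subseteq> X" "set r' \<subseteq> X" "set p \<subseteq> X"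
  shows "stably_braided (period_word (r @ t @ r') @ p @ a @ q)
    (period_word (r @ s @ r') @ p @ b @ q)"
proof -
  have move: "period_word (r @ u @ r') @ p @ c @ q
      \<sim> period_word (r @ r') @ p @ (period_word u @ c) @ q" if "set u \<subseteq> X" for u c
  proof -
    have "period_word (r @ u @ r') @ p @ c @ q \<sim> period_word (r @ r' @ u) @ p @ c @ q"
      using period_word_mset_eq[of "r @ u @ r'" "r @ r' @ u"] assms that by (simp add: ac_simps)
    also have "\<dots> = period_word (r @ r') @ (period_word u @ p) @ c @ q"
      by simp
    also have "\<dots> \<sim> period_word (r @ r') @ (p @ period_word u) @ c @ q"
      using braided_append[OF braided_sym[OF central_commute[OF central_period_word]]] assms that
      by blast
    finally show ?thesis by simp
  qed
  have "stably_braided (period_word (r @ r') @ p @ (period_word t @ a) @ q)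
      (period_word (r @ r') @ p @ (period_word s @ b) @ q)"
    using stably_braided_append[OF assms(1), of "period_word (r @ r') @ p" q] assms by simp
  then show ?thesis
    using move[OF assms(4)] braided_sym[OF move[OF assms(3)]]
      braided_stably_braided_trans stably_braided_braided_trans by blast
qed

section \<open>From the structure group to braid equivalence\<close>

text \<open>Each \<open>x\<^sup>-\<^sup>1\<close> is replaced by \<open>x\<^bsup>period - 1\<^esup>\<close>; since \<open>x\<^bsup>period\<^esup>\<close> is central in
  \<open>\<Gamma>\<^sub>X\<close>, a word equals its positive part times the inverse of the period word of its
  inverted letters.  Letters outside \<open>X\<close>, which the context rule of \<open>gamma_eq\<close> allows, are
  dropped.\<close>

definition positive_part :: "('a \<times> bool) list \<Rightarrow> 'a list" where
  "positive_part w = concat (map (\<lambda>(x, b). if x \<notin> X then [] else if b then [x]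
     else replicate (period - 1) x) w)"

definition inverted_letters :: "('a \<times> bool) list \<Rightarrow> 'a list" where
  "inverted_letters w = map fst (filter (\<lambda>(x, b). x \<in> X \<and> \<not> b) w)"

lemma positive_part_append [simp]: "positive_part (v @ w) = positive_part v @ positive_part w"
  unfolding positive_part_def by simp

lemma inverted_letters_append [simp]:
  "inverted_letters (v @ w) = inverted_letters v @ inverted_letters w"
  unfolding inverted_letters_def by simp

lemma set_positive_part: "set (positive_part w) \<subseteq> X"
  unfolding positive_part_def by (auto split: if_splits)

lemma set_inverted_letters: "set (inverted_letters w) \<subseteq> X"
  unfolding inverted_letters_def by auto

lemma positive_part_gamma_word: "set xs \<subseteq> X \<Longrightarrow> positive_part (gamma_word xs) = xs"
  unfolding positive_part_def gamma_word_def by (induction xs) auto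

lemma inverted_letters_gamma_word [simp]: "inverted_letters (gamma_word xs) = []"
  unfolding inverted_letters_def gamma_word_def by (induction xs) auto

lemma gamma_eq_imp_stably_braided:
  "gamma_eq X op w v \<Longrightarrow> stably_braided
     (period_word (inverted_letters v) @ positive_part w)
     (period_word (inverted_letters w) @ positive_part v)"
proof (induction rule: gamma_eq.induct)
  case (refl w)
  show ?case by (simp add: braided_imp_stably_braided)
next
  case (sym w v)
  show ?case using stably_braided_sym[OF sym.IH] .
next
  case (trans u v w)
  show ?case
    using stably_braided_period_word_trans[OF trans.IH] set_inverted_letters by blast
next
  case (ctxt w v p q)
  show ?case
    using stably_braided_period_word_append[OF ctxt.IH, of "inverted_letters p"
        "inverted_letters q"] set_inverted_letters set_positive_part by simp
next
  case (cancel x b)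
  have "replicate (period - 1) x @ [x] = replicate period x"
    and "x # replicate (period - 1) x = replicate period x"
    using period_pos by (metis Suc_diff_1 replicate_Suc replicate_append_same)+
  then show ?case
    using cancel by (cases b) (auto simp: positive_part_def inverted_letters_def
        intro: braided_imp_stably_braided)
next
  case (rel x y)
  have "replicate (period - 1) y @ [x, y] \<sim> replicate (period - 1) y @ [y, op x y]"
    using braided_move rel by blast
  also have "\<dots> = replicate period y @ [op x y]"
    using period_pos by (metis Suc_diff_1 append_Cons append_Nil append_assoc replicate_Suc
        replicate_append_same)
  finally show ?case
    using rel op_closed by (auto simp: positive_part_def inverted_letters_def
        intro: braided_imp_stably_braided)
qed

lemma gamma_eq_gamma_word_imp_stably_braided:
  assumes "gamma_eq X op (gamma_word xs) (gamma_word ys)" "set xs \<subseteq> X" "set ys \<subseteq> X"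
  shows "stably_braided xs ys"
  using gamma_eq_imp_stably_braided[OF assms(1)] assms(2,3) by (simp add: positive_part_gamma_word)

section \<open>Absorbing a letter into a generating tuple\<close>

lemma central_subword:
  assumes "set B \<subseteq> X" "card (X \<rightarrow>\<^sub>E X) < count_in C B"
  shows "\<exists>B1 u B2 c. B = B1 @ u @ B2 \<and> central u \<and> c \<in> set u \<and> c \<in> C"
proof -
  define J where "J = {i. i < length B \<and> B ! i \<in> C}"
  define g where "g i = restrict (act (take i B)) X" for i
  have take_X: "set (take i B) \<subseteq> X" for i
    using assms(1) by (meson set_take_subset subset_trans)
  have "card J = count_in C B"
    unfolding J_def count_in_def by (simp add: length_filter_conv_card)
  moreover have "g ` J \<subseteq> X \<rightarrow>\<^sub>E X"
    unfolding g_def using act_closed[OF take_X] by auto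
  moreover have "finite (X \<rightarrow>\<^sub>E X)"
    using finite_carrier by (simp add: finite_PiE)
  ultimately obtain i j where ij: "i \<in> J" "j \<in> J" "i < j" "g i = g j"
    using pigeonhole_less assms(2) by metis
  define u where "u = drop i (take j B)"
  have take_j: "take j B = take i B @ u"
    unfolding u_def using ij(3) by (metis append_take_drop_id less_imp_le_nat min.absorb1 take_take)
  then have B: "B = take i B @ u @ drop j B"
    by (metis append_assoc append_take_drop_id)
  have "central u" unfolding central_def
  proof (intro conjI ballI)
    show "set u \<subseteq> X" using assms(1) B by (metis Un_subset_iff set_append)
    fix z assume "z \<in> X"
    then obtain y where "y \<in> X" "z = act (take i B) y"
      using act_bij[OF take_X[of i]] unfolding bij_betw_def by auto
    moreover have "act (take j B) y = act (take i B) y"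
      using fun_cong[OF ij(4), of y] \<open>y \<in> X\<close> unfolding g_def by simp
    ultimately show "act u z = z" using take_j by (simp add: act_append)
  qed
  moreover have "B ! i \<in> set u" "B ! i \<in> C"
    using ij unfolding u_def J_def by (auto simp: in_set_conv_nth intro!: exI[of _ 0])
  ultimately show ?thesis using B by blast
qed

definition absorption_bound :: nat where
  "absorption_bound = card X + card (X \<rightarrow>\<^sub>E X) + 1"

lemma braided_central_factor:
  assumes "set w \<subseteq> X" "generates X op w" "C \<in> comps" "absorption_bound \<le> count_in C w"
  obtains u c t where "central u" "c \<in> set u" "c \<in> C" "set t \<subseteq> X" "generates X op t"
    "w \<sim> u @ t"
proof -
  obtain B where B: "set B \<subseteq> X" "w \<sim> remdups w @ B"
    using braided_remdups assms(1) by blast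
  have "count_in C (remdups w) \<le> card X"
    using card_mono[OF finite_carrier assms(1)]
    by (simp add: count_in_def length_remdups_card_conv order_trans[OF length_filter_le])
  moreover have "count_in C w = count_in C (remdups w) + count_in C B"
    using braided_count_in[OF B(2) assms(3)] by simp
  ultimately have "card (X \<rightarrow>\<^sub>E X) < count_in C B"
    using assms(4) unfolding absorption_bound_def by linarith
  then obtain B1 u B2 c where u: "B = B1 @ u @ B2" "central u" "c \<in> set u" "c \<in> C"
    using central_subword B(1) by blast
  define t where "t = remdups w @ B1 @ B2"
  have "set t \<subseteq> X" using assms(1) B(1) u(1) unfolding t_def by auto
  moreover have "generates X op t"
    using generates_mono[OF assms(2)] unfolding t_def by auto
  moreover have "w \<sim> u @ t"
  proof -
    have "(remdups w @ B1) @ u \<sim> u @ remdups w @ B1"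
      using central_commute[OF u(2), of "remdups w @ B1"] assms(1) B(1) u(1) by simp
    then have "remdups w @ B \<sim> u @ t"
      using braided_append_right[of _ _ B2] u(1) unfolding t_def by fastforce
    then show ?thesis using B(2) braided_trans by blast
  qed
  ultimately show ?thesis using that u by blast
qed

lemma braided_Cons_absorb:
  assumes "set w \<subseteq> X" "generates X op w" "C \<in> comps" "absorption_bound \<le> count_in C w"
    and "x \<in> C"
  obtains m where "set m \<subseteq> X" "generates X op m" "w \<sim> x # m"
proof -
  obtain u c t where u: "central u" "c \<in> set u" "c \<in> C" and t: "set t \<subseteq> X" "generates X op t"
    and "w \<sim> u @ t"
    using braided_central_factor assms(1-4) by blast
  then obtain v where v: "central v" "x \<in> set v" "w \<sim> v @ t"
    using central_conj_reaches_component[OF u(1,2) assms(3) u(3) assms(5) t] braided_trans by blast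
  then obtain v1 v2 where v12: "v = v1 @ x # v2" by (meson split_list)
  define m where "m = v2 @ map (act (x # v2)) v1 @ t"
  have "set v \<subseteq> X" using v(1) unfolding central_def by blast
  then have "v1 @ x # v2 \<sim> (x # v2) @ map (act (x # v2)) v1"
    using braided_swap_blocks[of v1 "x # v2"] \<open>set v \<subseteq> X\<close> v12 by simp
  then have "w \<sim> x # m"
    using braided_trans[OF v(3) braided_append_right] v12 unfolding m_def by fastforce
  moreover have "set m \<subseteq> X"
    using act_closed[of "x # v2"] \<open>set v \<subseteq> X\<close> v12 t(1) unfolding m_def
    by (auto simp del: act.simps)
  moreover have "generates X op m"
    unfolding m_def by (rule generates_mono[OF t(2)]) auto
  ultimately show ?thesis using that by blast
qed

section \<open>Counting braid classes\<close>

lemma length_eq_sum_count_in: "set w \<subseteq> X \<Longrightarrow> length w = (\<Sum>C\<in>comps. count_in C w)"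
proof (induction w)
  case (Cons a w)
  obtain Ca where Ca: "Ca \<in> comps" "a \<in> Ca"
    using component_exists Cons.prems by auto
  have "(\<Sum>C\<in>comps. if a \<in> C then 1 else 0 :: nat) = (\<Sum>C\<in>comps. if C = Ca then 1 else 0)"
    using component_unique Ca by (intro sum.cong) auto
  also have "\<dots> = 1"
    using Ca finite_components by simp
  finally show ?case
    using Cons by (simp add: sum.distrib)
qed simp

definition tuples :: "('a set \<Rightarrow> nat) \<Rightarrow> 'a list set" where
  "tuples n = {w. set w \<subseteq> X \<and> generates X op w \<and> (\<forall>C\<in>comps. count_in C w = n C)}"

definition braid_classes :: "('a set \<Rightarrow> nat) \<Rightarrow> 'a list set set" where
  "braid_classes n = braid_class ` tuples n"

lemma braid_classes_cong: "\<forall>C\<in>comps. n C = n' C \<Longrightarrow> braid_classes n = braid_classes n'"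
  unfolding braid_classes_def tuples_def by simp

lemma finite_braid_classes: "finite (braid_classes n)"
proof -
  have "tuples n \<subseteq> {w. set w \<subseteq> X \<and> length w = (\<Sum>C\<in>comps. n C)}"
    unfolding tuples_def using length_eq_sum_count_in by auto
  moreover have "finite {w. set w \<subseteq> X \<and> length w = (\<Sum>C\<in>comps. n C)}"
    using finite_lists_length_eq[OF finite_carrier] by blast
  ultimately show ?thesis
    unfolding braid_classes_def by (meson finite_imageI finite_subset)
qed

text \<open>Above the absorption bound, prepending a letter of \<open>C\<close> maps the classes with count
  vector \<open>n\<close> onto those with count vector \<open>n + e\<^sub>C\<close>; so the number of classes can only
  decrease, and once it is constant prepending is injective.\<close>

lemma prepend_braid_classes:
  assumes n: "\<forall>C\<in>comps. absorption_bound \<le> n C" and C: "C \<in> comps" "x \<in> C"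
  shows "prepend x ` braid_classes n = braid_classes (n(C := Suc (n C)))"
proof -
  have "x \<in> X" using component_subset C by blast
  have x_in_iff: "x \<in> C' \<longleftrightarrow> C' = C" if "C' \<in> comps" for C'
    using component_unique C that by blast
  have grow: "x # w \<in> tuples (n(C := Suc (n C)))" if "w \<in> tuples n" for w
    using that \<open>x \<in> X\<close> x_in_iff unfolding tuples_def by (auto intro: generates_mono)
  have shrink: "\<exists>m\<in>tuples n. w \<sim> x # m" if "w \<in> tuples (n(C := Suc (n C)))" for w
  proof -
    have "set w \<subseteq> X" "generates X op w" "absorption_bound \<le> count_in C w"
      using that n C unfolding tuples_def by auto
    then obtain m where m: "set m \<subseteq> X" "generates X op m" "w \<sim> x # m"
      using braided_Cons_absorb C by blast
    have "count_in C' m = n C'" if "C' \<in> comps" for C'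
      using braided_count_in[OF m(3) that] \<open>w \<in> tuples _\<close> that x_in_iff
      unfolding tuples_def by (auto split: if_splits)
    then show ?thesis using m unfolding tuples_def by auto
  qed
  show ?thesis
  proof (intro equalityI subsetI)
    fix S assume "S \<in> prepend x ` braid_classes n"
    then obtain w where "w \<in> tuples n" "S = braid_class (x # w)"
      unfolding braid_classes_def by (auto simp: prepend_braid_class)
    then show "S \<in> braid_classes (n(C := Suc (n C)))"
      using grow unfolding braid_classes_def by blast
  next
    fix S assume "S \<in> braid_classes (n(C := Suc (n C)))"
    then obtain w where w: "w \<in> tuples (n(C := Suc (n C)))" "S = braid_class w"
      unfolding braid_classes_def by blast
    then obtain m where "m \<in> tuples n" "w \<sim> x # m" using shrink by blast
    then have "S = prepend x (braid_class m)"
      using w(2) by (simp add: prepend_braid_class braid_class_eq_iff)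
    moreover have "braid_class m \<in> braid_classes n"
      unfolding braid_classes_def using \<open>m \<in> tuples n\<close> by (rule imageI)
    ultimately show "S \<in> prepend x ` braid_classes n" by (simp add: rev_image_eqI)
  qed
qed

lemma card_braid_classes_antimono:
  assumes "\<forall>C\<in>comps. absorption_bound \<le> n C" "\<forall>C\<in>comps. n C \<le> n' C"
  shows "card (braid_classes n') \<le> card (braid_classes n)"
  using assms(2)
proof (induction "\<Sum>C\<in>comps. n' C - n C" arbitrary: n' rule: less_induct)
  case less
  show ?case
  proof (cases "\<forall>C\<in>comps. n' C = n C")
    case True
    then have "braid_classes n' = braid_classes n" by (rule braid_classes_cong)
    then show ?thesis by simp
  next
    case False
    then obtain C where "C \<in> comps" "n' C \<noteq> n C" by blast
    with less.prems have C: "C \<in> comps" "n C < n' C" by force+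
    define n'' where "n'' = n'(C := n' C - 1)"
    have le: "\<forall>C\<in>comps. n C \<le> n'' C" using less.prems C unfolding n''_def by auto
    have "(\<Sum>C\<in>comps. n'' C - n C) < (\<Sum>C\<in>comps. n' C - n C)"
      using C less.prems finite_components unfolding n''_def
      by (intro sum_strict_mono_ex1) auto
    then have "card (braid_classes n'') \<le> card (braid_classes n)"
      using less.hyps le by blast
    moreover have "card (braid_classes (n''(C := Suc (n'' C)))) \<le> card (braid_classes n'')"
    proof -
      obtain x where "x \<in> C" using component_nonempty C(1) by blast
      moreover have "\<forall>C\<in>comps. absorption_bound \<le> n'' C"
        using le assms(1) order_trans by blast
      ultimately have "braid_classes (n''(C := Suc (n'' C))) = prepend x ` braid_classes n''"
        using prepend_braid_classes C(1) by blast
      then show ?thesis by (simp add: card_image_le finite_braid_classes)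
    qed
    moreover have "braid_classes n' = braid_classes (n''(C := Suc (n'' C)))"
      using C unfolding n''_def by (intro braid_classes_cong) auto
    ultimately show ?thesis by simp
  qed
qed

lemma card_braid_classes_stabilizes:
  "\<exists>t0\<ge>absorption_bound. \<forall>n. (\<forall>C\<in>comps. t0 \<le> n C) \<longrightarrow>
     card (braid_classes n) = card (braid_classes (\<lambda>_. t0))"
proof -
  define d where "d t = card (braid_classes (\<lambda>_. t))" for t
  obtain t0 where t0: "absorption_bound \<le> t0" "\<forall>t\<ge>absorption_bound. d t0 \<le> d t"
    using ex_has_least_nat[of "\<lambda>t. absorption_bound \<le> t" absorption_bound d] by auto
  have "card (braid_classes n) = d t0" if n: "\<forall>C\<in>comps. t0 \<le> n C" for n
  proof -
    define M where "M = Max (insert t0 (n ` comps))"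
    have "t0 \<le> M" "\<forall>C\<in>comps. n C \<le> M"
      using finite_components unfolding M_def by auto
    moreover have "\<forall>C\<in>comps. absorption_bound \<le> n C"
      using n t0(1) order_trans by blast
    ultimately have "d M \<le> card (braid_classes n)"
      using card_braid_classes_antimono[of n "\<lambda>_. M"] unfolding d_def by simp
    moreover have "card (braid_classes n) \<le> d t0"
      using card_braid_classes_antimono[of "\<lambda>_. t0" n] n t0(1) unfolding d_def by simp
    moreover have "d t0 \<le> d M"
      using t0 \<open>t0 \<le> M\<close> by simp
    ultimately show ?thesis by linarith
  qed
  then show ?thesis using t0(1) unfolding d_def by blast
qed

definition cancellation_bound :: nat where
  "cancellation_bound = (SOME t0. absorption_bound \<le> t0 \<and> (\<forall>n. (\<forall>C\<in>comps. t0 \<le> n C) \<longrightarrow>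
     card (braid_classes n) = card (braid_classes (\<lambda>_. t0))))"

lemma inj_on_prepend:
  assumes "\<forall>C\<in>comps. cancellation_bound \<le> n C" "x \<in> X"
  shows "inj_on (prepend x) (braid_classes n)"
proof -
  obtain t0 where t0: "absorption_bound \<le> t0" "cancellation_bound = t0"
    "\<forall>n. (\<forall>C\<in>comps. t0 \<le> n C) \<longrightarrow> card (braid_classes n) = card (braid_classes (\<lambda>_. t0))"
    using someI_ex[OF card_braid_classes_stabilizes] unfolding cancellation_bound_def by blast
  obtain C where C: "C \<in> comps" "x \<in> C" using component_exists assms(2) by blast
  have "\<forall>C\<in>comps. absorption_bound \<le> n C" using assms(1) t0(1,2) by auto
  then have "card (prepend x ` braid_classes n) = card (braid_classes (n(C := Suc (n C))))"
    using prepend_braid_classes C by simp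
  also have "\<dots> = card (braid_classes (\<lambda>_. t0))"
    using assms(1) t0(2) by (intro t0(3)[rule_format]) auto
  also have "\<dots> = card (braid_classes n)"
    using assms(1) t0(2) by (intro t0(3)[rule_format, symmetric]) auto
  finally show ?thesis
    using eq_card_imp_inj_on finite_braid_classes by blast
qed

lemma braided_cancel_prefix:
  assumes "set p \<subseteq> X" "set xs \<subseteq> X" "set ys \<subseteq> X" "generates X op xs" "generates X op ys"
    and "\<forall>C\<in>comps. cancellation_bound \<le> count_in C xs"
    and "\<forall>C\<in>comps. cancellation_bound \<le> count_in C ys"
    and "p @ xs \<sim> p @ ys"
  shows "xs \<sim> ys"
  using assms
proof (induction p)
  case (Cons x p)
  define n where "n C = count_in C (p @ xs)" for C
  have "\<forall>C\<in>comps. count_in C (p @ ys) = n C"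
    using braided_count_in[OF Cons.prems(8)] unfolding n_def by simp
  then have "braid_class (p @ xs) \<in> braid_classes n" "braid_class (p @ ys) \<in> braid_classes n"
    using Cons.prems generates_mono[of X op xs "p @ xs"] generates_mono[of X op ys "p @ ys"]
    unfolding braid_classes_def tuples_def n_def by auto
  moreover have "prepend x (braid_class (p @ xs)) = prepend x (braid_class (p @ ys))"
    using Cons.prems(8) braid_class_eq_iff by (simp add: prepend_braid_class)
  moreover have "inj_on (prepend x) (braid_classes n)"
    using inj_on_prepend Cons.prems(1,6) unfolding n_def by fastforce
  ultimately have "braid_class (p @ xs) = braid_class (p @ ys)"
    by (simp add: inj_on_eq_iff)
  then have "p @ xs \<sim> p @ ys" by (simp add: braid_class_eq_iff)
  then show ?case using Cons by simp
qed simp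

lemma stably_braided_imp_braided:
  assumes "stably_braided xs ys" "set xs \<subseteq> X" "set ys \<subseteq> X"
    "generates X op xs" "generates X op ys"
    "\<forall>C\<in>comps. cancellation_bound \<le> count_in C xs"
    "\<forall>C\<in>comps. cancellation_bound \<le> count_in C ys"
  shows "xs \<sim> ys"
proof -
  obtain s where "set s \<subseteq> X" "period_word s @ xs \<sim> period_word s @ ys"
    using assms(1) unfolding stably_braided_def by blast
  then show ?thesis
    using braided_cancel_prefix[of "period_word s"] assms(2-) by simp
qed

end

theorem theorem4p24:
  fixes X :: "'a set" and op :: "'a \<Rightarrow> 'a \<Rightarrow> 'a"
  assumes "finite X" and "rack X op"
  shows "\<exists>N0. \<forall>N \<ge> N0. \<forall>xs \<in> S_star X op N. \<forall>ys \<in> S_star X op N.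
           gamma_eq X op (gamma_word xs) (gamma_word ys) \<longrightarrow> braid_equiv op xs ys"
proof -
  interpret finite_rack X op
    using assms by unfold_locales
  show ?thesis
  proof (intro exI[of _ cancellation_bound] allI impI ballI)
    fix N xs ys
    assume "cancellation_bound \<le> N" "xs \<in> S_star X op N" "ys \<in> S_star X op N"
      and "gamma_eq X op (gamma_word xs) (gamma_word ys)"
    then have "set xs \<subseteq> X" "set ys \<subseteq> X" "generates X op xs" "generates X op ys"
      "\<forall>C\<in>comps. cancellation_bound \<le> count_in C xs"
      "\<forall>C\<in>comps. cancellation_bound \<le> count_in C ys"
      unfolding S_star_def count_in_def by (auto intro: order_trans)
    then show "braid_equiv op xs ys"
      using gamma_eq_gamma_word_imp_stably_braided \<open>gamma_eq X op _ _\<close>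
        stably_braided_imp_braided braided_imp_braid_equiv by blast
  qed
qed

end
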